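(* Let $n\ge1$, $0\le N_b<n$, $p\in[0,1]$, and $N_l=n-N_b$. In the $p$-parking process on $\mathbb{Z}/n\mathbb{Z}$ with $N_b$ cars, let $H^1$ be the set of free parking spots after all cars have parked. For every $X\subseteq\mathbb{Z}/n\mathbb{Z}$ with $|X|=N_l$, writing $\ell_i=\Delta_iX$ for $i\in\mathbb{Z}/N_l\mathbb{Z}$, $$\mathbb{P}(H^1=X)=\frac{1}{n^{N_b}}\binom{N_b}{\ell_1,\dots,\ell_{N_l}}\prod_{i\in\mathbb{Z}/N_l\mathbb{Z}}(\ell_i+1)^{\ell_i-1}.$$ In particular it does not depend on $p$.
   Context: $p$-parking process: initially every vertex of $\mathbb{Z}/n\mathbb{Z}$ is a free parking spot. $N_b$ cars arrive successively; the $i$-th car chooses a vertex $v_i$ uniformly at random, independently of everything else, and from $v_i$ performs a random walk (from $k$ to $k+1\bmod n$ w.p. $p$, to $k-1\bmod n$ w.p. $1-p$) until it is at a free spot (possibly $v_i$ itself), where it parks; that spot is then occupied forever. Block notation: with $\pi:\mathbb{Z}/n\mathbb{Z}\to\{1,\dots,n\}$ the canonical bijection, a set $X$ of size $k$ is listed as $(x_i)_{i\in\mathbb{Z}/k\mathbb{Z}}$ with $\pi(x_1)<\dots<\pi(x_k)=\pi(x_0)$, and $\Delta_iX=\pi(x_{i+1})-\pi(x_i)-1\bmod n$. *)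

theory Defs
  imports Complex_Main
begin

text \<open>Vertices of the cycle Z/nZ are encoded as the naturals 0,...,n-1; the canonical
bijection pi is then v |-> v+1, which is order preserving.\<close>

definition walk_step :: "nat \<Rightarrow> real \<Rightarrow> nat \<Rightarrow> nat \<Rightarrow> real" where
  "walk_step n p z y =
     (if y = (z + 1) mod n then p else 0) + (if y = (z + n - 1) mod n then 1 - p else 0)"

fun walk_killed :: "nat \<Rightarrow> real \<Rightarrow> nat set \<Rightarrow> nat \<Rightarrow> nat \<Rightarrow> nat \<Rightarrow> real" where
  "walk_killed n p Occ 0 v y = (if y = v then 1 else 0)"
| "walk_killed n p Occ (Suc k) v y = (\<Sum>z\<in>Occ. walk_killed n p Occ k v z * walk_step n p z y)"

text \<open>Probability that a car starting at v, with occupied set Occ, parks at the free spot x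
 (i.e. the walk first hits the free set {0..<n} - Occ at x).\<close>
definition park_at :: "nat \<Rightarrow> real \<Rightarrow> nat set \<Rightarrow> nat \<Rightarrow> nat \<Rightarrow> real" where
  "park_at n p Occ v x = (if x < n \<and> x \<notin> Occ then (\<Sum>k. walk_killed n p Occ k v x) else 0)"

fun occupied_prob :: "nat \<Rightarrow> real \<Rightarrow> nat \<Rightarrow> nat set \<Rightarrow> real" where
  "occupied_prob n p 0 S = (if S = {} then 1 else 0)"
| "occupied_prob n p (Suc k) S =
     (if S \<subseteq> {0..<n} then
        (\<Sum>x\<in>S. occupied_prob n p k (S - {x}) *
                   ((\<Sum>v<n. park_at n p (S - {x}) v x) / real n))
      else 0)"

definition free_prob :: "nat \<Rightarrow> real \<Rightarrow> nat \<Rightarrow> nat set \<Rightarrow> real" where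
  "free_prob n p Nb X = occupied_prob n p Nb ({0..<n} - X)"

text \<open>Gap Delta_i X = pi(x_{i+1}) - pi(x_i) - 1 mod n, where x_0 < ... < x_{k-1} lists X
 (0-indexed; indices taken mod k = card X).\<close>
definition gap :: "nat \<Rightarrow> nat set \<Rightarrow> nat \<Rightarrow> nat" where
  "gap n X i = (let xs = sorted_list_of_set X; k = length xs in
     nat ((int (xs ! ((i + 1) mod k)) - int (xs ! i) - 1) mod int n))"

end

theory Submission
  imports Defs
begin

text \<open>Write the free spots as a set \<open>X\<close>; after each \<open>y \<in> X\<close> comes a block of
  \<open>\<ell>(y)\<close> occupied spots. By induction on the number of cars, the occupied set is \<open>S\<close> with
  probability \<open>|S|! / n^|S| \<cdot> \<Prod>\<^sub>y \<phi>(\<ell>(y))\<close>, where \<open>\<phi>(\<ell>) = (\<ell>+1)^(\<ell>-1) / \<ell>!\<close>.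
  The last car parked at a spot \<open>x\<close> that splits a block of length \<open>\<ell>\<close> into blocks of
  lengths \<open>a\<close> and \<open>\<ell>-1-a\<close>. Summed over its start, the probability to park at \<open>x\<close> is
  \<open>(1 + R(a) + L(\<ell>-1-a)) / n\<close>, where \<open>R(a)\<close> (\<open>L(b)\<close>) sums over the starts in a
  block of length \<open>a\<close> (\<open>b\<close>) the probability that the walk killed on leaving the block leaves
  it to the right (left). After symmetrising the sum over \<open>a\<close>, only \<open>R(a) + L(a) = a\<close>
  matters, since the walk leaves a finite interval almost surely; so \<open>p\<close> drops out, and
  the induction step becomes \<open>\<Sum>a<\<ell>. \<phi>(a) \<phi>(\<ell>-1-a) (1+a) = \<ell> \<phi>(\<ell>)\<close>, a special case of
  Abel's identity.\<close>

section \<open>Abel's identity\<close>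

lemma alternating_binomial_sum_Suc:
  fixes f :: "nat \<Rightarrow> real"
  shows "(\<Sum>k\<le>Suc m. real (Suc m choose k) * (-1)^k * f k) =
         (\<Sum>k\<le>m. real (m choose k) * (-1)^k * (f k - f (Suc k)))"
proof -
  have "(\<Sum>k\<le>Suc m. real (Suc m choose k) * (-1)^k * f k) =
     f 0 + (\<Sum>k\<le>m. real (m choose Suc k) * (-1)^(Suc k) * f (Suc k)
         + real (m choose k) * (-1)^(Suc k) * f (Suc k))"
    by (simp add: sum.atMost_Suc_shift algebra_simps del: sum.atMost_Suc)
  then have split: "(\<Sum>k\<le>Suc m. real (Suc m choose k) * (-1)^k * f k) =
     f 0 + (\<Sum>k\<le>m. real (m choose Suc k) * (-1)^(Suc k) * f (Suc k))
         + (\<Sum>k\<le>m. real (m choose k) * (-1)^(Suc k) * f (Suc k))"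
    unfolding sum.distrib by simp
  have shift: "(\<Sum>k\<le>m. real (m choose k) * (-1)^k * f k) =
      f 0 + (\<Sum>k\<le>m. real (m choose Suc k) * (-1)^(Suc k) * f (Suc k))"
  proof -
    have "(\<Sum>k\<le>m. real (m choose k) * (-1)^k * f k) =
        (\<Sum>k\<le>Suc m. real (m choose k) * (-1)^k * f k)"
      by simp
    also have "\<dots> = f 0 + (\<Sum>k\<le>m. real (m choose Suc k) * (-1)^(Suc k) * f (Suc k))"
      by (simp add: sum.atMost_Suc_shift del: sum.atMost_Suc)
    finally show ?thesis .
  qed
  have "(\<Sum>k\<le>m. real (m choose k) * (-1)^k * (f k - f (Suc k))) =
     (\<Sum>k\<le>m. real (m choose k) * (-1)^k * f k) + (\<Sum>k\<le>m. real (m choose k) * (-1)^(Suc k) * f (Suc k))"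
    unfolding sum.distrib[symmetric] by (rule sum.cong) (auto simp: algebra_simps)
  then show ?thesis
    using split shift by simp
qed

lemma alternating_binomial_sum_power:
  "j < m \<Longrightarrow> (\<Sum>k\<le>m. real (m choose k) * (-1)^k * (x + real k)^j) = 0"
proof (induction m arbitrary: j x)
  case 0
  then show ?case by simp
next
  case (Suc m)
  have diff: "(x + real k)^j - (x + real (Suc k))^j = - (\<Sum>i<j. real (j choose i) * (x + real k)^i)"
    for k
  proof -
    have "(x + real (Suc k))^j = (\<Sum>i\<le>j. real (j choose i) * (x + real k)^i)"
      using binomial_ring[of "x + real k" 1 j] by (simp add: add_ac mult.commute)
    then show ?thesis
      by (simp add: lessThan_Suc_atMost[symmetric])
  qed
  have "(\<Sum>k\<le>Suc m. real (Suc m choose k) * (-1)^k * (x + real k)^j) =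
      - (\<Sum>i<j. real (j choose i) * (\<Sum>k\<le>m. real (m choose k) * (-1)^k * (x + real k)^i))"
    unfolding alternating_binomial_sum_Suc diff
    by (simp add: sum_distrib_left sum_negf sum.swap[of _ "{..<j}"] algebra_simps)
  also have "\<dots> = 0"
    using Suc by simp
  finally show ?case .
qed

definition abel_poly :: "real \<Rightarrow> nat \<Rightarrow> real" where
  "abel_poly x k = (if k = 0 then 1 else x * (x + real k)^(k - 1))"

lemma abel_identity_at_root:
  assumes "m \<ge> 1"
  shows "(\<Sum>k\<le>m. real (m choose k) * abel_poly x k * (- x - real k)^(m - k)) = 0"
proof -
  have "real (m choose k) * abel_poly x k * (- x - real k)^(m - k) =
      x * (-1)^m * (real (m choose k) * (-1)^k * (x + real k)^(m - 1))" if "k \<le> m" for k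
  proof -
    have sign: "(-1::real)^(m - k) = (-1)^m * (-1)^k"
      using \<open>k \<le> m\<close> by (simp add: power_diff_conv_inverse)
    have "(- x - real k)^(m - k) = (-1)^(m - k) * (x + real k)^(m - k)"
      by (simp add: power_mult_distrib[symmetric])
    then have "real (m choose k) * abel_poly x k * (- x - real k)^(m - k) =
        (-1)^m * (real (m choose k) * (-1)^k) * (abel_poly x k * (x + real k)^(m - k))"
      unfolding sign by (simp only: mult_ac)
    also have "abel_poly x k * (x + real k)^(m - k) = x * (x + real k)^(m - 1)"
    proof (cases "k = 0")
      case True
      then show ?thesis
        using assms by (simp add: abel_poly_def power_eq_if[of x m])
    next
      case False
      then show ?thesis
        using \<open>k \<le> m\<close> by (simp add: abel_poly_def power_add[symmetric])
    qed
    finally show ?thesis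
      by (simp only: mult_ac)
  qed
  then have "(\<Sum>k\<le>m. real (m choose k) * abel_poly x k * (- x - real k)^(m - k)) =
      (\<Sum>k\<le>m. x * (-1)^m * (real (m choose k) * (-1)^k * (x + real k)^(m - 1)))"
    by (intro sum.cong refl) simp
  also have "\<dots> = x * (-1)^m * (\<Sum>k\<le>m. real (m choose k) * (-1)^k * (x + real k)^(m - 1))"
    by (simp add: sum_distrib_left)
  also have "\<dots> = 0"
    using alternating_binomial_sum_power[of "m - 1" m x] assms by simp
  finally show ?thesis .
qed

lemma abel_sum_derivative:
  "(\<Sum>k\<le>Suc m. real (Suc m choose k) * abel_poly x k *
      (real (Suc m - k) * (y + real (Suc m) - real k)^(Suc m - k - 1)))
    = real (Suc m) * (\<Sum>k\<le>m. real (m choose k) * abel_poly x k * ((y + 1) + real m - real k)^(m - k))"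
proof -
  have "(\<Sum>k\<le>Suc m. real (Suc m choose k) * abel_poly x k *
      (real (Suc m - k) * (y + real (Suc m) - real k)^(Suc m - k - 1)))
    = (\<Sum>k\<le>m. real (Suc m choose k) * abel_poly x k *
      (real (Suc m - k) * (y + real (Suc m) - real k)^(Suc m - k - 1)))"
    by simp
  also have "\<dots> = (\<Sum>k\<le>m. real (Suc m) *
      (real (m choose k) * abel_poly x k * ((y + 1) + real m - real k)^(m - k)))"
  proof (rule sum.cong[OF refl])
    fix k assume "k \<in> {..m}"
    then have k: "k \<le> m" and shift: "y + real (Suc m) - real k = (y + 1) + real m - real k"
      and exp: "Suc m - k - 1 = m - k"
      by auto
    have absorb: "real (Suc m choose k) * real (Suc m - k) = real (Suc m) * real (m choose k)"
      using binomial_absorb_comp[of "Suc m" k] k by (metis diff_Suc_1 of_nat_mult mult.commute)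
    let ?P = "((y + 1) + real m - real k)^(m - k)"
    have "real (Suc m choose k) * abel_poly x k *
        (real (Suc m - k) * (y + real (Suc m) - real k)^(Suc m - k - 1))
      = abel_poly x k * ?P * (real (Suc m choose k) * real (Suc m - k))"
      unfolding shift exp by (simp only: mult_ac)
    also have "\<dots> = real (Suc m) * (real (m choose k) * abel_poly x k * ?P)"
      unfolding absorb by (simp only: mult_ac)
    finally show "real (Suc m choose k) * abel_poly x k *
        (real (Suc m - k) * (y + real (Suc m) - real k)^(Suc m - k - 1))
      = real (Suc m) * (real (m choose k) * abel_poly x k * ?P)" .
  qed
  finally show ?thesis
    by (simp add: sum_distrib_left)
qed

text \<open>Differentiating in \<open>y\<close> gives the identity for \<open>m - 1\<close> at \<open>y + 1\<close>; the constant of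
  integration vanishes at \<open>y = - x - m\<close>.\<close>

theorem abel_identity:
  "(\<Sum>k\<le>m. real (m choose k) * abel_poly x k * (y + real m - real k)^(m - k)) = (x + y + real m)^m"
proof (induction m arbitrary: y)
  case 0
  then show ?case by (simp add: abel_poly_def)
next
  case (Suc m)
  define f where "f y = (\<Sum>k\<le>Suc m. real (Suc m choose k) * abel_poly x k *
      (y + real (Suc m) - real k)^(Suc m - k))" for y
  define g where "g y = (x + y + real (Suc m))^(Suc m)" for y
  have f': "(f has_real_derivative real (Suc m) * (x + y + real (Suc m))^m) (at y)" for y
  proof -
    have "(f has_real_derivative (\<Sum>k\<le>Suc m. real (Suc m choose k) * abel_poly x k *
        (real (Suc m - k) * (y + real (Suc m) - real k)^(Suc m - k - 1)))) (at y)"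
      unfolding f_def by (auto intro!: derivative_eq_intros sum.cong simp: mult.assoc)
    then show ?thesis
      unfolding abel_sum_derivative Suc.IH by (simp add: algebra_simps)
  qed
  have g': "(g has_real_derivative (real (Suc m) * (x + y + real (Suc m))^m)) (at y)" for y
    unfolding g_def by (auto intro!: derivative_eq_intros simp del: power_Suc)
  have "\<forall>y. ((\<lambda>y. f y - g y) has_real_derivative 0) (at y)"
    using DERIV_diff[OF f' g'] by simp
  then have "f y - g y = f (- x - real (Suc m)) - g (- x - real (Suc m))"
    by (rule DERIV_isconst_all)
  also have "\<dots> = 0"
    using abel_identity_at_root[of "Suc m" x] unfolding f_def g_def by simp
  finally show ?case unfolding f_def g_def by simp
qed

lemma sum_atMost_reflect: "(\<Sum>a\<le>(m::nat). f a) = (\<Sum>a\<le>m. f (m - a))"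
  by (rule sum.reindex_bij_witness[where i="\<lambda>a. m - a" and j="\<lambda>a. m - a"]) auto

lemma sum_lessThan_reflect: "(\<Sum>a<(l::nat). f a) = (\<Sum>a<l. f (l - Suc a))"
  by (rule sum.reindex_bij_witness[where i="\<lambda>a. l - Suc a" and j="\<lambda>a. l - Suc a"]) auto

text \<open>\<open>(l + 1)^(l - 1)\<close> is the number of parking functions of length \<open>l\<close>.\<close>

definition park_weight :: "nat \<Rightarrow> real" where
  "park_weight l = real ((l + 1)^(l - 1)) / fact l"

lemma park_weight_mult_Suc: "park_weight a * (1 + real a) = real ((a + 1)^a) / fact a"
proof (cases a)
  case 0
  then show ?thesis by (simp add: park_weight_def)
next
  case (Suc b)
  then show ?thesis by (simp add: park_weight_def field_simps)
qed

lemma park_weight_convolution: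
  assumes "l \<ge> 1"
  shows "(\<Sum>a<l. park_weight a * park_weight (l - Suc a) * (1 + real a)) = real l * park_weight l"
proof -
  obtain m where l: "l = Suc m"
    using assms by (cases l) auto
  have "(\<Sum>a<l. park_weight a * park_weight (l - Suc a) * (1 + real a))
      = (\<Sum>a\<le>m. real (m choose a) * real ((a + 1)^a) * real ((m - a + 1)^(m - a - 1))) / fact m"
    unfolding sum_divide_distrib l lessThan_Suc_atMost
  proof (rule sum.cong[OF refl])
    fix a assume "a \<in> {..m}"
    then have a: "a \<le> m" by simp
    have "park_weight a * park_weight (Suc m - Suc a) * (1 + real a)
        = (park_weight a * (1 + real a)) * park_weight (m - a)"
      by (simp add: mult_ac)
    also have "\<dots> = real ((a + 1)^a) / fact a * (real ((m - a + 1)^(m - a - 1)) / fact (m - a))"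
      unfolding park_weight_mult_Suc by (simp add: park_weight_def)
    also have "\<dots> = real (m choose a) * real ((a + 1)^a) * real ((m - a + 1)^(m - a - 1)) / fact m"
      using binomial_fact[OF a, where 'a=real] by (simp add: field_simps)
    finally show "park_weight a * park_weight (Suc m - Suc a) * (1 + real a) = \<dots>" .
  qed
  also have "(\<Sum>a\<le>m. real (m choose a) * real ((a + 1)^a) * real ((m - a + 1)^(m - a - 1)))
      = (\<Sum>k\<le>m. real (m choose k) * abel_poly 1 k * (1 + real m - real k)^(m - k))"
    by (subst sum_atMost_reflect)
      (auto intro!: sum.cong simp: binomial_symmetric[symmetric] abel_poly_def add.commute)
  also have "\<dots> = real ((m + 2)^m)"
    by (simp add: abel_identity)
  also have "real ((m + 2)^m) / fact m = real l * park_weight l"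
  proof -
    have "(fact l :: real) = real l * fact m"
      using l by simp
    then show ?thesis
      using l by (simp add: park_weight_def)
  qed
  finally show ?thesis .
qed

section \<open>The walk killed on leaving an interval\<close>

definition interval_step :: "real \<Rightarrow> nat \<Rightarrow> nat \<Rightarrow> real" where
  "interval_step p z w = (if w = Suc z then p else 0) + (if Suc w = z then 1 - p else 0)"

fun interval_walk :: "nat \<Rightarrow> real \<Rightarrow> nat \<Rightarrow> nat \<Rightarrow> nat \<Rightarrow> real" where
  "interval_walk a p 0 j i = (if i = j then 1 else 0)"
| "interval_walk a p (Suc k) j i = (\<Sum>z\<in>{1..a}. interval_walk a p k j z * interval_step p z i)"

definition interval_survival :: "nat \<Rightarrow> real \<Rightarrow> nat \<Rightarrow> nat \<Rightarrow> real" where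
  "interval_survival a p k j = (\<Sum>z\<in>{1..a}. interval_walk a p k j z)"

definition exit_right :: "nat \<Rightarrow> real \<Rightarrow> real" where
  "exit_right a p = (\<Sum>j\<in>{1..a}. \<Sum>k. interval_walk a p k j (Suc a))"

definition exit_left :: "nat \<Rightarrow> real \<Rightarrow> real" where
  "exit_left a p = (\<Sum>j\<in>{1..a}. \<Sum>k. interval_walk a p k j 0)"

lemma interval_walk_add:
  assumes "y \<in> {1..a}"
  shows "interval_walk a p (k + m) j y = (\<Sum>z\<in>{1..a}. interval_walk a p k j z * interval_walk a p m z y)"
  using assms
proof (induction m arbitrary: y)
  case 0
  then show ?case
    by (simp add: if_distrib[where f="\<lambda>x. _ * x"] cong: if_cong)
next
  case (Suc m)
  have "interval_walk a p (k + Suc m) j y =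
      (\<Sum>w\<in>{1..a}. (\<Sum>z\<in>{1..a}. interval_walk a p k j z * interval_walk a p m z w) * interval_step p w y)"
    by (simp add: Suc.IH)
  also have "\<dots> = (\<Sum>z\<in>{1..a}. interval_walk a p k j z *
      (\<Sum>w\<in>{1..a}. interval_walk a p m z w * interval_step p w y))"
    by (simp add: sum_distrib_left sum_distrib_right mult.assoc) (rule sum.swap)
  finally show ?case
    by simp
qed

lemma interval_survival_add:
  "interval_survival a p (k + m) j = (\<Sum>z\<in>{1..a}. interval_walk a p k j z * interval_survival a p m z)"
proof -
  have "interval_survival a p (k + m) j =
      (\<Sum>y\<in>{1..a}. \<Sum>z\<in>{1..a}. interval_walk a p k j z * interval_walk a p m z y)"
    unfolding interval_survival_def by (rule sum.cong[OF refl], rule interval_walk_add, simp)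
  also have "\<dots> = (\<Sum>z\<in>{1..a}. interval_walk a p k j z * interval_survival a p m z)"
    by (subst sum.swap) (simp only: interval_survival_def sum_distrib_left)
  finally show ?thesis .
qed

lemma interval_walk_outside: "j \<notin> {1..a} \<Longrightarrow> z \<in> {1..a} \<Longrightarrow> interval_walk a p k j z = 0"
  by (induction k arbitrary: z) auto

lemma interval_survival_outside: "j \<notin> {1..a} \<Longrightarrow> interval_survival a p k j = 0"
  by (simp add: interval_survival_def interval_walk_outside)

lemma interval_survival_0: "interval_survival a p 0 j = (if j \<in> {1..a} then 1 else 0)"
  by (simp add: interval_survival_def if_distrib cong: if_cong)

text \<open>Since the survival probability vanishes off \<open>{1..a}\<close>, the boundary needs no case split.\<close>

lemma interval_survival_Suc:
  assumes "z \<in> {1..a}"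
  shows "interval_survival a p (Suc m) z =
    p * interval_survival a p m (Suc z) + (1 - p) * interval_survival a p m (z - 1)"
proof -
  let ?Q = "interval_survival a p m"
  have "interval_survival a p (Suc m) z = (\<Sum>w\<in>{1..a}. interval_walk a p 1 z w * ?Q w)"
    using interval_survival_add[of a p 1 m z] by simp
  also have "\<dots> = (\<Sum>w\<in>{0..Suc a}. interval_step p z w * ?Q w)"
  proof (rule sum.mono_neutral_cong_left)
    show "\<forall>w\<in>{0..Suc a} - {1..a}. interval_step p z w * ?Q w = 0"
      by (auto simp: interval_survival_outside)
  next
    fix w assume "w \<in> {1..a}"
    then show "interval_walk a p 1 z w * ?Q w = interval_step p z w * ?Q w"
      using assms by (simp add: if_distrib[where f="\<lambda>x. x * _"] cong: if_cong)
  qed auto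
  also have "\<dots> = (\<Sum>w\<in>{0..Suc a}. (if w = Suc z then p * ?Q w else 0))
      + (\<Sum>w\<in>{0..Suc a}. (if w = z - 1 then (1 - p) * ?Q w else 0))"
    unfolding sum.distrib[symmetric]
    using assms by (intro sum.cong refl) (auto simp: interval_step_def)
  also have "\<dots> = p * ?Q (Suc z) + (1 - p) * ?Q (z - 1)"
  proof -
    have "Suc z \<in> {0..Suc a}" "z - 1 \<in> {0..Suc a}"
      using assms by auto
    then show ?thesis
      by (simp only: sum.delta finite_atLeastAtMost if_True)
  qed
  finally show ?thesis .
qed

context
  fixes p :: real
  assumes p0: "0 \<le> p" and p1: "p \<le> 1"
begin

lemma interval_walk_nonneg: "interval_walk a p k j i \<ge> 0"
  using p0 p1
  by (induction k arbitrary: i) (auto intro!: sum_nonneg mult_nonneg_nonneg simp: interval_step_def)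

lemma interval_survival_nonneg: "interval_survival a p k j \<ge> 0"
  unfolding interval_survival_def by (auto intro!: sum_nonneg interval_walk_nonneg)

lemma interval_survival_le_1: "interval_survival a p m z \<le> 1"
proof (induction m arbitrary: z)
  case 0
  then show ?case by (simp add: interval_survival_0)
next
  case (Suc m)
  show ?case
  proof (cases "z \<in> {1..a}")
    case True
    have "p * interval_survival a p m (Suc z) + (1 - p) * interval_survival a p m (z - 1) \<le> p + (1 - p)"
      using Suc.IH p0 p1 by (intro add_mono mult_left_le) auto
    then show ?thesis
      using interval_survival_Suc[OF True] by simp
  qed (simp add: interval_survival_outside)
qed

text \<open>From \<open>z\<close>, \<open>d\<close> consecutive steps to the right leave the interval.\<close>

lemma interval_survival_le_right: "a + 1 \<le> z + d \<Longrightarrow> interval_survival a p d z \<le> 1 - p^d"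
proof (induction d arbitrary: z)
  case 0
  then show ?case by (simp add: interval_survival_0)
next
  case (Suc d)
  show ?case
  proof (cases "z \<in> {1..a}")
    case True
    have "interval_survival a p (Suc d) z =
        p * interval_survival a p d (Suc z) + (1 - p) * interval_survival a p d (z - 1)"
      by (rule interval_survival_Suc[OF True])
    also have "\<dots> \<le> p * (1 - p^d) + (1 - p)"
      using Suc.IH[of "Suc z"] Suc.prems interval_survival_le_1 p0 p1
      by (intro add_mono mult_left_mono mult_left_le) auto
    finally show ?thesis
      by (simp add: algebra_simps)
  next
    case False
    then show ?thesis
      using power_le_one[OF p0 p1, of "Suc d"] by (simp add: interval_survival_outside)
  qed
qed

lemma interval_survival_le_left: "z \<le> d \<Longrightarrow> interval_survival a p d z \<le> 1 - (1 - p)^d"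
proof (induction d arbitrary: z)
  case 0
  then show ?case by (simp add: interval_survival_0)
next
  case (Suc d)
  show ?case
  proof (cases "z \<in> {1..a}")
    case True
    have "interval_survival a p (Suc d) z =
        p * interval_survival a p d (Suc z) + (1 - p) * interval_survival a p d (z - 1)"
      by (rule interval_survival_Suc[OF True])
    also have "\<dots> \<le> p + (1 - p) * (1 - (1 - p)^d)"
      using Suc.IH[of "z - 1"] Suc.prems interval_survival_le_1 p0 p1
      by (intro add_mono mult_left_mono mult_left_le) auto
    finally show ?thesis
      by (simp add: algebra_simps)
  next
    case False
    have "(1 - p)^Suc d \<le> 1"
      using p0 p1 by (intro power_le_one) auto
    with False show ?thesis
      by (simp add: interval_survival_outside)
  qed
qed

lemma interval_survival_le_geometric:
  "interval_survival a p (r * a) j \<le> (1 - max p (1 - p) ^ a)^r"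
proof (induction r arbitrary: j)
  case 0
  then show ?case by (simp add: interval_survival_0)
next
  case (Suc r)
  let ?q = "1 - max p (1 - p) ^ a"
  have block: "interval_survival a p a z \<le> ?q" for z
  proof (cases "z \<in> {1..a}")
    case True
    then have "interval_survival a p a z \<le> 1 - p^a" "interval_survival a p a z \<le> 1 - (1 - p)^a"
      by (auto intro: interval_survival_le_right interval_survival_le_left)
    then show ?thesis
      by (simp add: max_def)
  next
    case False
    then show ?thesis
      using p0 p1 by (simp add: interval_survival_outside max_def power_le_one)
  qed
  have "interval_survival a p (Suc r * a) j =
      (\<Sum>z\<in>{1..a}. interval_walk a p a j z * interval_survival a p (r * a) z)"
    using interval_survival_add[of a p a "r * a" j] by (simp add: add.commute)
  also have "\<dots> \<le> (\<Sum>z\<in>{1..a}. interval_walk a p a j z * ?q^r)"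
    by (intro sum_mono mult_left_mono Suc.IH interval_walk_nonneg)
  also have "\<dots> = interval_survival a p a j * ?q^r"
    by (simp add: interval_survival_def sum_distrib_right)
  also have "\<dots> \<le> ?q * ?q^r"
    using block p0 p1 by (intro mult_right_mono) (auto simp: max_def power_le_one)
  finally show ?case
    by simp
qed

lemma interval_mass_balance:
  assumes "j \<in> {1..a}"
  shows "interval_walk a p (Suc k) j 0 + interval_walk a p (Suc k) j (Suc a) + interval_survival a p (Suc k) j
    = interval_survival a p k j"
proof -
  have row_sum: "(\<Sum>i\<in>{0..Suc a}. interval_step p z i) = 1" if "z \<in> {1..a}" for z
  proof -
    have "(\<Sum>i\<in>{0..Suc a}. interval_step p z i) =
        (\<Sum>i\<in>{0..Suc a}. if i = Suc z then p else 0) + (\<Sum>i\<in>{0..Suc a}. if i = z - 1 then 1 - p else 0)"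
      unfolding sum.distrib[symmetric]
      using that by (intro sum.cong refl) (auto simp: interval_step_def)
    moreover have "Suc z \<in> {0..Suc a}" "z - 1 \<in> {0..Suc a}"
      using that by auto
    ultimately show ?thesis
      by (simp only: sum.delta finite_atLeastAtMost if_True)
  qed
  have "(\<Sum>i\<in>{0..Suc a}. interval_walk a p (Suc k) j i) =
      (\<Sum>z\<in>{1..a}. interval_walk a p k j z * (\<Sum>i\<in>{0..Suc a}. interval_step p z i))"
    by (simp only: interval_walk.simps sum_distrib_left) (rule sum.swap)
  also have "\<dots> = interval_survival a p k j"
    unfolding interval_survival_def by (rule sum.cong[OF refl]) (subst row_sum, auto)
  finally show ?thesis
    using assms
    by (simp add: interval_survival_def atLeast0_atMost_Suc atLeastAtMost_insertL[symmetric] add_ac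
        del: interval_walk.simps)
qed

lemma interval_survival_antimono: "j \<in> {1..a} \<Longrightarrow> interval_survival a p (i + d) j \<le> interval_survival a p i j"
proof (induction d)
  case (Suc d)
  have "interval_survival a p (i + Suc d) j \<le> interval_survival a p (i + d) j"
    using interval_mass_balance[OF Suc.prems, of "i + d"]
      interval_walk_nonneg[of a "Suc (i + d)" j 0] interval_walk_nonneg[of a "Suc (i + d)" j "Suc a"]
    by simp
  with Suc show ?case
    by simp
qed simp

lemma interval_survival_tendsto_0: "(\<lambda>k. interval_survival a p k j) \<longlonglongrightarrow> 0"
proof (cases "j \<in> {1..a}")
  case j: True
  let ?q = "1 - max p (1 - p) ^ a"
  have q: "0 \<le> ?q" "?q < 1"
    using p0 p1 by (auto simp: max_def power_le_one)
  show ?thesis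
  proof (rule LIMSEQ_I)
    fix r :: real assume "0 < r"
    from LIMSEQ_D[OF LIMSEQ_power_zero[of ?q] this] q obtain N where N: "?q^N < r"
      by auto
    have "norm (interval_survival a p k j - 0) < r" if "k \<ge> N * a" for k
    proof -
      obtain d where "k = N * a + d"
        using \<open>k \<ge> N * a\<close> le_Suc_ex by blast
      then have "interval_survival a p k j \<le> interval_survival a p (N * a) j"
        using interval_survival_antimono[OF j] by simp
      also have "\<dots> \<le> ?q^N"
        by (rule interval_survival_le_geometric)
      finally have "interval_survival a p k j \<le> ?q^N" .
      then show ?thesis
        using N interval_survival_nonneg[of a k j] by simp
    qed
    then show "\<exists>no. \<forall>k\<ge>no. norm (interval_survival a p k j - 0) < r"
      by blast
  qed
next
  case False
  then have "(\<lambda>k. interval_survival a p k j) = (\<lambda>k. 0)"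
    by (simp add: interval_survival_outside)
  then show ?thesis
    by simp
qed

lemma interval_exit_sums:
  assumes j: "j \<in> {1..a}"
  shows "(\<lambda>k. interval_walk a p k j 0 + interval_walk a p k j (Suc a)) sums 1"
proof -
  have partial: "(\<Sum>k<Suc K. interval_walk a p k j 0 + interval_walk a p k j (Suc a)) =
      1 - interval_survival a p K j" for K
  proof (induction K)
    case 0
    show ?case
      using j by (simp add: interval_survival_0)
  next
    case (Suc K)
    then show ?case
      using interval_mass_balance[OF j, of K] by (simp del: interval_walk.simps)
  qed
  have "(\<lambda>K. 1 - interval_survival a p K j) \<longlonglongrightarrow> 1 - 0"
    by (intro tendsto_diff tendsto_const interval_survival_tendsto_0)
  then have "(\<lambda>K. \<Sum>k<Suc K. interval_walk a p k j 0 + interval_walk a p k j (Suc a)) \<longlonglongrightarrow> 1"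
    unfolding partial by simp
  then show ?thesis
    unfolding sums_def by (rule LIMSEQ_imp_Suc)
qed

lemma exit_right_plus_exit_left: "exit_right a p + exit_left a p = real a"
proof -
  have exits_one: "(\<Sum>k. interval_walk a p k j 0) + (\<Sum>k. interval_walk a p k j (Suc a)) = 1"
    if j: "j \<in> {1..a}" for j
  proof -
    note exits = interval_exit_sums[OF j]
    have "summable (\<lambda>k. interval_walk a p k j 0)" "summable (\<lambda>k. interval_walk a p k j (Suc a))"
      by (auto intro!: summable_comparison_test'[OF sums_summable[OF exits]] simp: interval_walk_nonneg)
    then show ?thesis
      using sums_unique[OF exits] suminf_add[of "\<lambda>k. interval_walk a p k j 0"] by simp
  qed
  have "exit_right a p + exit_left a p =
      (\<Sum>j\<in>{1..a}. (\<Sum>k. interval_walk a p k j 0) + (\<Sum>k. interval_walk a p k j (Suc a)))"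
    by (simp add: exit_right_def exit_left_def sum.distrib add.commute)
  also have "\<dots> = (\<Sum>j\<in>{1..a}. 1)"
    using exits_one by (intro sum.cong refl) auto
  finally show ?thesis
    by simp
qed

lemma park_weight_exit_convolution:
  "(\<Sum>a<l. park_weight a * park_weight (l - Suc a) * (1 + exit_right a p + exit_left (l - Suc a) p)) =
    real l * park_weight l"
proof (cases "l = 0")
  case False
  have "(\<Sum>a<l. park_weight a * park_weight (l - Suc a) * exit_left (l - Suc a) p) =
      (\<Sum>a<l. park_weight (l - Suc a) * park_weight a * exit_left a p)"
    by (subst sum_lessThan_reflect) (auto intro!: sum.cong simp: Suc_diff_le)
  then have "(\<Sum>a<l. park_weight a * park_weight (l - Suc a) * (1 + exit_right a p + exit_left (l - Suc a) p)) =
      (\<Sum>a<l. park_weight a * park_weight (l - Suc a) * (1 + (exit_right a p + exit_left a p)))"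
    by (simp add: sum.distrib algebra_simps)
  also have "\<dots> = (\<Sum>a<l. park_weight a * park_weight (l - Suc a) * (1 + real a))"
    by (simp add: exit_right_plus_exit_left)
  also have "\<dots> = real l * park_weight l"
    using False by (simp add: park_weight_convolution)
  finally show ?thesis .
qed simp

end

section \<open>Blocks of occupied spots on the cycle\<close>

definition cshift :: "nat \<Rightarrow> nat \<Rightarrow> nat \<Rightarrow> nat" where
  "cshift n c i = (c + i) mod n"

definition cdist :: "nat \<Rightarrow> nat \<Rightarrow> nat \<Rightarrow> nat" where
  "cdist n c z = (z + n - c) mod n"

definition block_len :: "nat \<Rightarrow> nat set \<Rightarrow> nat \<Rightarrow> nat" where
  "block_len n X y = (LEAST d. cshift n y (Suc d) \<in> X)"

context
  fixes n :: nat
  assumes n_pos: "n > 0"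
begin

lemma cshift_less: "cshift n c i < n"
  using n_pos by (simp add: cshift_def)

lemma cdist_less: "cdist n c z < n"
  using n_pos by (simp add: cdist_def)

lemma cshift_cshift: "cshift n (cshift n c i) j = cshift n c (i + j)"
  by (simp add: cshift_def mod_add_left_eq add.assoc)

lemma cshift_mod: "cshift n c (i mod n) = cshift n c i"
  by (simp add: cshift_def mod_add_right_eq)

lemma cshift_0: "c < n \<Longrightarrow> cshift n c 0 = c"
  by (simp add: cshift_def)

lemma cshift_n: "c < n \<Longrightarrow> cshift n c n = c"
  by (simp add: cshift_def)

lemma cshift_cdist: "c < n \<Longrightarrow> z < n \<Longrightarrow> cshift n c (cdist n c z) = z"
proof -
  assume c: "c < n" and z: "z < n"
  have "cshift n c (cdist n c z) = (c + (z + n - c)) mod n"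
    by (simp add: cshift_def cdist_def mod_add_right_eq)
  also have "c + (z + n - c) = z + n"
    using c by simp
  finally show ?thesis
    using z by simp
qed

lemma cdist_cshift: "c < n \<Longrightarrow> i < n \<Longrightarrow> cdist n c (cshift n c i) = i"
proof -
  assume c: "c < n" and i: "i < n"
  have "cdist n c (cshift n c i) = ((c + i) mod n + (n - c)) mod n"
    using c by (simp add: cdist_def cshift_def)
  also have "\<dots> = (c + i + (n - c)) mod n"
    by (simp add: mod_add_left_eq)
  also have "c + i + (n - c) = i + n"
    using c by simp
  finally show ?thesis
    using i by simp
qed

lemma cshift_inj: "c < n \<Longrightarrow> i < n \<Longrightarrow> i' < n \<Longrightarrow> cshift n c i = cshift n c i' \<Longrightarrow> i = i'"
  by (metis cdist_cshift)

lemma cdist_eq_0D: "c < n \<Longrightarrow> z < n \<Longrightarrow> cdist n c z = 0 \<Longrightarrow> z = c"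
  by (metis cshift_0 cshift_cdist)

lemma cdist_add:
  assumes "c < n" "c' < n" "z < n"
  shows "cdist n c z = (cdist n c c' + cdist n c' z) mod n"
proof -
  have "cshift n c ((cdist n c c' + cdist n c' z) mod n) = z"
    using assms by (metis cshift_cdist cshift_cshift cshift_mod)
  then have "cdist n c z = cdist n c (cshift n c ((cdist n c c' + cdist n c' z) mod n))"
    by simp
  also have "\<dots> = (cdist n c c' + cdist n c' z) mod n"
    using assms n_pos by (intro cdist_cshift) auto
  finally show ?thesis .
qed

context
  fixes X :: "nat set"
  assumes X_sub: "X \<subseteq> {0..<n}"
begin

lemma cshift_Suc_block_len_mem: "y \<in> X \<Longrightarrow> cshift n y (Suc (block_len n X y)) \<in> X"
  unfolding block_len_def
proof (rule LeastI)
  assume "y \<in> X"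
  then show "cshift n y (Suc (n - 1)) \<in> X"
    using n_pos X_sub by (auto simp: cshift_def)
qed

lemma block_len_less: "y \<in> X \<Longrightarrow> block_len n X y < n"
proof -
  assume "y \<in> X"
  then have "block_len n X y \<le> n - 1"
    unfolding block_len_def using n_pos X_sub by (intro Least_le) (auto simp: cshift_def)
  then show ?thesis
    using n_pos by linarith
qed

lemma cshift_notin_block: "c \<in> X \<Longrightarrow> i \<in> {1..block_len n X c} \<Longrightarrow> cshift n c i \<notin> X"
  using not_less_Least[of "i - 1" "\<lambda>d. cshift n c (Suc d) \<in> X"]
  by (cases i) (auto simp: block_len_def)

lemma block_len_eqI:
  "cshift n y (Suc L) \<in> X \<Longrightarrow> (\<And>d. d < L \<Longrightarrow> cshift n y (Suc d) \<notin> X) \<Longrightarrow> block_len n X y = L"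
  unfolding block_len_def by (rule Least_equality) (auto simp: not_less[symmetric])

lemma blocks_disjoint:
  assumes c: "c \<in> X" and c': "c' \<in> X"
    and i: "i \<in> {1..block_len n X c}" and i': "i' \<in> {1..block_len n X c'}"
    and eq: "cshift n c i = cshift n c' i'"
  shows "c = c'"
proof (rule ccontr)
  assume "c \<noteq> c'"
  have cn: "c < n" "c' < n"
    using c c' X_sub by auto
  have il: "i < n" "i' < n"
    using i i' block_len_less[OF c] block_len_less[OF c'] by auto
  define e where "e = cdist n c c'"
  have "e \<noteq> 0" "e < n"
    using cdist_eq_0D[OF cn] \<open>c \<noteq> c'\<close> cdist_less by (auto simp: e_def)
  have c'e: "c' = cshift n c e"
    using cshift_cdist[OF cn] e_def by simp
  have "e > block_len n X c"
    using cshift_notin_block[OF c, of e] c' c'e \<open>e \<noteq> 0\<close> by force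
  have "cshift n c i < n"
    by (rule cshift_less)
  then have "i = (e + i') mod n"
    using cdist_add[OF cn] cdist_cshift[OF cn(1) il(1)]
      cdist_cshift[OF cn(2) il(2)] eq e_def by simp
  with \<open>e > block_len n X c\<close> \<open>e < n\<close> i il have "e + i' \<ge> n" and "i = e + i' - n"
    by (auto simp: not_le mod_if split: if_splits)
  text \<open>Then \<open>c\<close> itself lies in the block after \<open>c'\<close>, at position \<open>n - e\<close>.\<close>
  have "cshift n c' (n - e) = c"
    using c'e cshift_cshift \<open>e < n\<close> cshift_n[OF cn(1)] by simp
  moreover have "n - e \<in> {1..block_len n X c'}"
    using i i' \<open>i = e + i' - n\<close> \<open>e + i' \<ge> n\<close> \<open>e < n\<close> by auto
  ultimately show False
    using cshift_notin_block[OF c'] c by metis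
qed

lemma blocks_cover:
  assumes "X \<noteq> {}" and z: "z < n" "z \<notin> X"
  shows "\<exists>c\<in>X. \<exists>i\<in>{1..block_len n X c}. z = cshift n c i"
proof -
  text \<open>Take the free spot \<open>c\<close> closest to \<open>z\<close> counterclockwise.\<close>
  define d0 where "d0 = (LEAST d. \<exists>c\<in>X. cdist n c z = d)"
  have "\<exists>c\<in>X. cdist n c z = d0"
    unfolding d0_def by (rule LeastI_ex) (use \<open>X \<noteq> {}\<close> in blast)
  then obtain c where c: "c \<in> X" and cd: "cdist n c z = d0"
    by blast
  have min: "d0 \<le> cdist n c' z" if "c' \<in> X" for c'
    unfolding d0_def by (rule Least_le) (use that in blast)
  have cn: "c < n"
    using c X_sub by auto
  have zc: "z = cshift n c d0"
    using cshift_cdist[OF cn z(1)] cd by simp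
  have "d0 \<noteq> 0"
  proof
    assume "d0 = 0"
    then show False
      using zc cshift_0[OF cn] z c by simp
  qed
  moreover have "d0 \<le> block_len n X c"
  proof (rule ccontr)
    assume "\<not> d0 \<le> block_len n X c"
    define s where "s = Suc (block_len n X c)"
    have "s \<le> d0" "s < n"
      using \<open>\<not> d0 \<le> block_len n X c\<close> cdist_less[of c z] cd by (auto simp: s_def)
    define c'' where "c'' = cshift n c s"
    have c''X: "c'' \<in> X"
      using cshift_Suc_block_len_mem[OF c] by (simp add: c''_def s_def)
    have "cdist n c c'' = s"
      using cdist_cshift[OF cn \<open>s < n\<close>] by (simp add: c''_def)
    moreover have "c'' < n"
      by (simp add: c''_def cshift_less)
    ultimately have "d0 = (s + cdist n c'' z) mod n"
      using cdist_add[OF cn _ z(1), of c''] cd by simp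
    moreover have "d0 \<le> cdist n c'' z" "cdist n c'' z < n" "s > 0"
      using min[OF c''X] cdist_less by (auto simp: s_def)
    ultimately show False
      using \<open>s \<le> d0\<close> \<open>s < n\<close> by (auto simp: mod_if split: if_splits)
  qed
  ultimately have "d0 \<in> {1..block_len n X c}"
    by simp
  then show ?thesis
    using c zc by blast
qed

lemma bij_betw_blocks:
  assumes "X \<noteq> {}"
  shows "bij_betw (\<lambda>(c, i). cshift n c i) (SIGMA c:X. {1..block_len n X c}) ({0..<n} - X)"
proof (rule bij_betwI')
  fix u v assume "u \<in> (SIGMA c:X. {1..block_len n X c})" "v \<in> (SIGMA c:X. {1..block_len n X c})"
  then obtain c i c' i' where u: "u = (c, i)" "c \<in> X" "i \<in> {1..block_len n X c}"
    and v: "v = (c', i')" "c' \<in> X" "i' \<in> {1..block_len n X c'}"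
    by auto
  show "((case u of (c, i) \<Rightarrow> cshift n c i) = (case v of (c, i) \<Rightarrow> cshift n c i)) = (u = v)"
  proof
    assume "(case u of (c, i) \<Rightarrow> cshift n c i) = (case v of (c, i) \<Rightarrow> cshift n c i)"
    then have eq: "cshift n c i = cshift n c' i'"
      using u v by simp
    then have "c = c'"
      using blocks_disjoint u v by blast
    moreover have "i = i'"
      using cshift_inj[of c i i'] eq \<open>c = c'\<close> X_sub u v block_len_less[OF u(2)] by auto
    ultimately show "u = v"
      using u v by simp
  qed simp
next
  fix u assume "u \<in> (SIGMA c:X. {1..block_len n X c})"
  then show "(case u of (c, i) \<Rightarrow> cshift n c i) \<in> {0..<n} - X"
    using cshift_notin_block cshift_less by auto
next
  fix z assume "z \<in> {0..<n} - X"
  then have "z < n" "z \<notin> X"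
    by auto
  then obtain c i where "c \<in> X" "i \<in> {1..block_len n X c}" "z = cshift n c i"
    using blocks_cover[OF assms] by blast
  then show "\<exists>u\<in>(SIGMA c:X. {1..block_len n X c}). z = (case u of (c, i) \<Rightarrow> cshift n c i)"
    by (intro bexI[of _ "(c, i)"]) auto
qed

lemma sum_complement_blocks:
  assumes "X \<noteq> {}"
  shows "(\<Sum>v\<in>{0..<n} - X. f v) = (\<Sum>c\<in>X. \<Sum>i\<in>{1..block_len n X c}. f (cshift n c i))"
proof -
  have "finite X"
    using X_sub finite_subset by blast
  then have "(\<Sum>c\<in>X. \<Sum>i\<in>{1..block_len n X c}. f (cshift n c i)) =
      (\<Sum>(c, i)\<in>(SIGMA c:X. {1..block_len n X c}). f (cshift n c i))"
    by (simp add: sum.Sigma)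
  also have "\<dots> = (\<Sum>v\<in>{0..<n} - X. f v)"
    using sum.reindex_bij_betw[OF bij_betw_blocks[OF assms], of f] by (simp add: case_prod_beta)
  finally show ?thesis
    by simp
qed

lemma free_spot_outside_block:
  assumes c: "c \<in> X" and "x \<in> X" "x \<noteq> c" "x \<noteq> cshift n c (Suc (block_len n X c))"
  shows "x \<notin> cshift n c ` {0..Suc (block_len n X c)}"
proof
  assume "x \<in> cshift n c ` {0..Suc (block_len n X c)}"
  then obtain i where i: "i \<le> Suc (block_len n X c)" "x = cshift n c i"
    by auto
  have "c < n"
    using c X_sub by auto
  then have "i \<noteq> 0"
    using assms(3) i(2) cshift_0 by metis
  with i assms(4) have "i \<in> {1..block_len n X c}"
    by (cases "i = Suc (block_len n X c)") auto
  then show False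
    using cshift_notin_block[OF c] \<open>x \<in> X\<close> i(2) by simp
qed

lemma sum_block_len: "X \<noteq> {} \<Longrightarrow> (\<Sum>c\<in>X. block_len n X c) = n - card X"
  using sum_complement_blocks[of "\<lambda>_. 1::nat"] X_sub
  by (simp add: card_Diff_subset finite_subset)

end

lemma block_len_ge_2:
  assumes "X \<subseteq> {0..<n}" and c: "c \<in> X" and w: "w \<in> X" "w \<noteq> c"
  shows "block_len n X c + 2 \<le> n"
proof (rule ccontr)
  assume "\<not> block_len n X c + 2 \<le> n"
  have cn: "c < n" "w < n"
    using assms by auto
  have "cdist n c w \<in> {1..block_len n X c}"
    using cdist_eq_0D[OF cn] w cdist_less[of c w] \<open>\<not> block_len n X c + 2 \<le> n\<close> by fastforce
  then show False
    using cshift_notin_block[OF assms(1) c] cshift_cdist[OF cn] w by metis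
qed

context
  fixes X y a x
  assumes X_sub: "X \<subseteq> {0..<n}" and y: "y \<in> X" and a: "a < block_len n X y"
    and x: "x = cshift n y (Suc a)"
begin

lemma new_spot_notin: "x \<notin> X"
  using cshift_notin_block[OF X_sub y, of "Suc a"] a x by auto

lemma insert_new_spot_sub: "insert x X \<subseteq> {0..<n}"
  using X_sub x cshift_less by auto

lemma block_len_insert_left: "block_len n (insert x X) y = a"
proof (rule block_len_eqI[OF insert_new_spot_sub])
  show "cshift n y (Suc a) \<in> insert x X"
    using x by simp
next
  fix d assume "d < a"
  then have "cshift n y (Suc d) \<noteq> x"
    using cshift_inj[of y "Suc d" "Suc a"] y X_sub a block_len_less[OF X_sub y] x by auto
  moreover have "cshift n y (Suc d) \<notin> X"
    using cshift_notin_block[OF X_sub y, of "Suc d"] \<open>d < a\<close> a by simp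
  ultimately show "cshift n y (Suc d) \<notin> insert x X"
    by simp
qed

lemma block_len_insert_right: "block_len n (insert x X) x = block_len n X y - Suc a"
proof (rule block_len_eqI[OF insert_new_spot_sub])
  have "cshift n x (Suc (block_len n X y - Suc a)) = cshift n y (Suc (block_len n X y))"
    using x a by (simp add: cshift_cshift)
  then show "cshift n x (Suc (block_len n X y - Suc a)) \<in> insert x X"
    using cshift_Suc_block_len_mem[OF X_sub y] by simp
next
  fix d assume d: "d < block_len n X y - Suc a"
  have "cshift n x (Suc d) = cshift n y (Suc (Suc a + d))"
    using x by (simp add: cshift_cshift)
  moreover have "cshift n y (Suc (Suc a + d)) \<notin> X"
    using cshift_notin_block[OF X_sub y, of "Suc (Suc a + d)"] d by simp
  moreover have "Suc (Suc a + d) < n"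
    using d block_len_less[OF X_sub y] by linarith
  then have "cshift n y (Suc (Suc a + d)) \<noteq> x"
    using cshift_inj[of y "Suc (Suc a + d)" "Suc a"] y X_sub x by auto
  ultimately show "cshift n x (Suc d) \<notin> insert x X"
    by simp
qed

lemma block_len_insert_other: "z \<in> X \<Longrightarrow> z \<noteq> y \<Longrightarrow> block_len n (insert x X) z = block_len n X z"
proof (rule block_len_eqI[OF insert_new_spot_sub])
  assume z: "z \<in> X" "z \<noteq> y"
  show "cshift n z (Suc (block_len n X z)) \<in> insert x X"
    using cshift_Suc_block_len_mem[OF X_sub z(1)] by simp
  fix d assume d: "d < block_len n X z"
  have "cshift n z (Suc d) \<noteq> x"
    using blocks_disjoint[OF X_sub z(1) y, of "Suc d" "Suc a"] d a x z(2) by auto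
  then show "cshift n z (Suc d) \<notin> insert x X"
    using cshift_notin_block[OF X_sub z(1), of "Suc d"] d by simp
qed

end

section \<open>The walk inside a block\<close>

lemma walk_step_cshift:
  assumes "c < n" "m \<ge> 1"
  shows "walk_step n p (cshift n c m) y =
     (if y = cshift n c (Suc m) then p else 0) + (if y = cshift n c (m - 1) then 1 - p else 0)"
proof -
  have "(cshift n c m + 1) mod n = cshift n c (Suc m)"
    by (simp add: cshift_def mod_Suc_eq)
  moreover have "(cshift n c m + n - 1) mod n = cshift n c (m - 1)"
  proof -
    have "cshift n c m + n - 1 = cshift n c m + (n - 1)"
      using n_pos by simp
    then have "(cshift n c m + n - 1) mod n = (c + m + (n - 1)) mod n"
      by (simp add: cshift_def mod_add_left_eq)
    also have "c + m + (n - 1) = (c + (m - 1)) + n"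
      using assms n_pos by simp
    finally show ?thesis
      by (simp add: cshift_def)
  qed
  ultimately show ?thesis
    by (simp add: walk_step_def)
qed

lemma park_at_free_start:
  assumes "v \<notin> Occ" "x < n" "x \<notin> Occ"
  shows "park_at n p Occ v x = (if x = v then 1 else 0)"
proof -
  have vanish: "walk_killed n p Occ k v z = 0" if "z \<in> Occ" for k z
    using that assms(1) by (induction k arbitrary: z) auto
  have "walk_killed n p Occ k v x = (if k = 0 then (if x = v then 1 else 0) else 0)" for k
    by (cases k) (simp_all add: vanish)
  then show ?thesis
    using assms(2,3) sums_unique[OF sums_single[of 0 "\<lambda>_. if x = v then 1 else 0::real"]]
    by (simp add: park_at_def)
qed

text \<open>Inside a maximal block \<open>c + 1, \<dots>, c + a\<close> of occupied spots the killed walk on the cycle is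
  the killed walk on \<open>{1..a}\<close>, with the free ends \<open>c\<close> and \<open>c + a + 1\<close> in the roles of \<open>0\<close> and
  \<open>a + 1\<close>; they are distinct since \<open>a + 2 \<le> n\<close>.\<close>

context
  fixes Occ :: "nat set" and c a :: nat
  assumes Occ_sub: "Occ \<subseteq> {0..<n}" and c: "c < n" and a: "a + 2 \<le> n"
    and block_occupied: "cshift n c ` {1..a} \<subseteq> Occ"
    and start_free: "c \<notin> Occ" and end_free: "cshift n c (Suc a) \<notin> Occ"
begin

lemma cshift_block_eq_iff: "i \<le> Suc a \<Longrightarrow> i' \<le> Suc a \<Longrightarrow> cshift n c i = cshift n c i' \<longleftrightarrow> i = i'"
  using cshift_inj[OF c, of i i'] a by auto

lemma occupied_in_blockD:
  assumes "z \<in> Occ" "z \<in> cshift n c ` {0..Suc a}"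
  obtains i where "i \<in> {1..a}" "z = cshift n c i"
proof -
  obtain i where i: "i \<le> Suc a" "z = cshift n c i"
    using assms(2) by auto
  have "i \<noteq> 0"
  proof
    assume "i = 0"
    then have "z = c"
      using i cshift_0[OF c] by simp
    with assms(1) start_free show False
      by simp
  qed
  moreover have "i \<noteq> Suc a"
    using i assms(1) end_free by auto
  ultimately have "i \<in> {1..a}"
    using i(1) by auto
  then show ?thesis
    using that i(2) by blast
qed

lemma walk_killed_block_support:
  assumes "j \<in> {1..a}"
  shows "y \<notin> cshift n c ` {0..Suc a} \<Longrightarrow> walk_killed n p Occ k (cshift n c j) y = 0"
proof (induction k arbitrary: y)
  case 0
  then show ?case
    using assms by auto
next
  case (Suc k)
  have terms_zero: "walk_killed n p Occ k (cshift n c j) z * walk_step n p z y = 0" if "z \<in> Occ" for z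
  proof (cases "z \<in> cshift n c ` {0..Suc a}")
    case True
    then obtain i where "i \<in> {1..a}" "z = cshift n c i"
      using occupied_in_blockD \<open>z \<in> Occ\<close> by blast
    moreover have "y \<noteq> cshift n c (Suc i)" "y \<noteq> cshift n c (i - 1)"
      using Suc.prems \<open>i \<in> {1..a}\<close> by auto
    ultimately show ?thesis
      by (simp add: walk_step_cshift[OF c])
  qed (simp add: Suc.IH)
  show ?case
    unfolding walk_killed.simps by (rule sum.neutral) (use terms_zero in blast)
qed

lemma walk_killed_block_Suc:
  assumes "j \<in> {1..a}"
  shows "walk_killed n p Occ (Suc k) (cshift n c j) y =
    (\<Sum>m\<in>{1..a}. walk_killed n p Occ k (cshift n c j) (cshift n c m) * walk_step n p (cshift n c m) y)"
proof -
  have "finite Occ"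
    using Occ_sub finite_subset by blast
  have "walk_killed n p Occ (Suc k) (cshift n c j) y =
      (\<Sum>z\<in>cshift n c ` {1..a}. walk_killed n p Occ k (cshift n c j) z * walk_step n p z y)"
    unfolding walk_killed.simps
  proof (rule sum.mono_neutral_right[OF \<open>finite Occ\<close>])
    show "cshift n c ` {1..a} \<subseteq> Occ"
      using block_occupied by auto
    show "\<forall>z\<in>Occ - cshift n c ` {1..a}. walk_killed n p Occ k (cshift n c j) z * walk_step n p z y = 0"
      using occupied_in_blockD walk_killed_block_support[OF assms] by (metis DiffE image_eqI mult_zero_left)
  qed
  also have "\<dots> = (\<Sum>m\<in>{1..a}. walk_killed n p Occ k (cshift n c j) (cshift n c m) * walk_step n p (cshift n c m) y)"
    by (rule sum.reindex[unfolded comp_def]) (auto simp: inj_on_def cshift_block_eq_iff)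
  finally show ?thesis .
qed

lemma walk_killed_block:
  assumes "j \<in> {1..a}"
  shows "i \<le> Suc a \<Longrightarrow> walk_killed n p Occ k (cshift n c j) (cshift n c i) = interval_walk a p k j i"
proof (induction k arbitrary: i)
  case 0
  then show ?case
    using assms cshift_block_eq_iff[of i j] by auto
next
  case (Suc k)
  have step: "walk_step n p (cshift n c m) (cshift n c i) = interval_step p m i" if "m \<in> {1..a}" for m
    using that Suc.prems
    by (auto simp: walk_step_cshift[OF c] interval_step_def cshift_block_eq_iff)
  have "walk_killed n p Occ (Suc k) (cshift n c j) (cshift n c i) =
      (\<Sum>m\<in>{1..a}. walk_killed n p Occ k (cshift n c j) (cshift n c m) * walk_step n p (cshift n c m) (cshift n c i))"
    by (rule walk_killed_block_Suc[OF assms])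
  also have "\<dots> = (\<Sum>m\<in>{1..a}. interval_walk a p k j m * interval_step p m i)"
    using Suc.IH step by (intro sum.cong refl) auto
  finally show ?case
    by simp
qed

end

lemma sum_park_at_block:
  assumes X_sub: "X \<subseteq> {0..<n}" and c: "c \<in> X" and w: "w \<in> X" "w \<noteq> c" and x: "x \<in> X"
  shows "(\<Sum>j\<in>{1..block_len n X c}. park_at n p ({0..<n} - X) (cshift n c j) x) =
    (if x = c then exit_left (block_len n X c) p
     else if x = cshift n c (Suc (block_len n X c)) then exit_right (block_len n X c) p
     else 0)"
proof -
  define a where "a = block_len n X c"
  define Occ where "Occ = {0..<n} - X"
  have cn: "c < n" and xn: "x < n"
    using c x X_sub by auto
  have block: "Occ \<subseteq> {0..<n}" "a + 2 \<le> n" "cshift n c ` {1..a} \<subseteq> Occ"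
    "c \<notin> Occ" "cshift n c (Suc a) \<notin> Occ"
    using block_len_ge_2[OF X_sub c w] cshift_notin_block[OF X_sub c] cshift_less c
      cshift_Suc_block_len_mem[OF X_sub c]
    by (auto simp: a_def Occ_def)
  note walk = walk_killed_block[OF block(1) cn block(2-5)]
  have park: "park_at n p Occ (cshift n c j) x = (\<Sum>k. walk_killed n p Occ k (cshift n c j) x)" for j
    using xn x by (simp add: park_at_def Occ_def)
  consider "x = c" | "x \<noteq> c" "x = cshift n c (Suc a)" | "x \<noteq> c" "x \<noteq> cshift n c (Suc a)"
    by blast
  then show ?thesis
  proof cases
    case 1
    have "park_at n p Occ (cshift n c j) c = (\<Sum>k. interval_walk a p k j 0)" if "j \<in> {1..a}" for j
      using park[of j] walk[OF that, of 0] cshift_0[OF cn] 1 by simp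
    then show ?thesis
      using 1 by (simp add: exit_left_def a_def[symmetric] Occ_def[symmetric])
  next
    case 2
    have "park_at n p Occ (cshift n c j) (cshift n c (Suc a)) = (\<Sum>k. interval_walk a p k j (Suc a))"
      if "j \<in> {1..a}" for j
      using park[of j] walk[OF that, of "Suc a"] 2 by simp
    then show ?thesis
      using 2 by (simp add: exit_right_def a_def[symmetric] Occ_def[symmetric])
  next
    case 3
    then have "walk_killed n p Occ k (cshift n c j) x = 0" if "j \<in> {1..a}" for k j
      using walk_killed_block_support[OF block(1) cn block(2-5) that]
        free_spot_outside_block[OF X_sub c x] by (simp add: a_def)
    then show ?thesis
      using 3 by (simp add: park a_def[symmetric] Occ_def[symmetric])
  qed
qed

lemma sum_park_at_eq_blocks:
  assumes X_sub: "X \<subseteq> {0..<n}" and x: "x \<in> X"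
  shows "(\<Sum>v<n. park_at n p ({0..<n} - X) v x) =
    1 + (\<Sum>c\<in>X. \<Sum>i\<in>{1..block_len n X c}. park_at n p ({0..<n} - X) (cshift n c i) x)"
proof -
  have "finite X"
    using X_sub finite_subset by blast
  have "(\<Sum>v<n. park_at n p ({0..<n} - X) v x) =
      (\<Sum>v\<in>X. park_at n p ({0..<n} - X) v x) + (\<Sum>v\<in>{0..<n} - X. park_at n p ({0..<n} - X) v x)"
    using X_sub by (simp add: atLeast0LessThan[symmetric] sum.subset_diff add.commute)
  also have "(\<Sum>v\<in>X. park_at n p ({0..<n} - X) v x) = (\<Sum>v\<in>X. if x = v then 1 else 0)"
    using X_sub x by (intro sum.cong refl) (auto simp: park_at_free_start)
  also have "\<dots> = 1"
    using \<open>finite X\<close> x by simp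
  also have "(\<Sum>v\<in>{0..<n} - X. park_at n p ({0..<n} - X) v x) =
      (\<Sum>c\<in>X. \<Sum>i\<in>{1..block_len n X c}. park_at n p ({0..<n} - X) (cshift n c i) x)"
    using x by (intro sum_complement_blocks[OF X_sub]) auto
  finally show ?thesis .
qed

end

section \<open>The parking formula\<close>

definition parking_formula :: "nat \<Rightarrow> nat set \<Rightarrow> real" where
  "parking_formula n X =
    fact (n - card X) / real n ^ (n - card X) * (\<Prod>y\<in>X. park_weight (block_len n X y))"

context
  fixes n :: nat
  assumes n_pos: "n > 0"
begin

lemma sum_park_at_new_spot:
  assumes X_sub: "X \<subseteq> {0..<n}" and y: "y \<in> X" and a: "a < block_len n X y"
    and x: "x = cshift n y (Suc a)"
  shows "(\<Sum>v<n. park_at n p ({0..<n} - insert x X) v x) =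
    1 + exit_right a p + exit_left (block_len n X y - Suc a) p"
proof -
  define X' where "X' = insert x X"
  define G where "G c = (\<Sum>i\<in>{1..block_len n X' c}. park_at n p ({0..<n} - X') (cshift n c i) x)" for c
  have x_notin: "x \<notin> X"
    by (rule new_spot_notin[OF n_pos X_sub y a x])
  have X'_sub: "X' \<subseteq> {0..<n}"
    unfolding X'_def by (rule insert_new_spot_sub[OF n_pos X_sub y a x])
  have "finite X"
    using X_sub finite_subset by blast
  have "x \<noteq> y"
    using x_notin y by auto
  have G: "G c = (if c = x then exit_left (block_len n X' c) p
      else if x = cshift n c (Suc (block_len n X' c)) then exit_right (block_len n X' c) p else 0)"
    if "c \<in> X'" for c
  proof -
    obtain w where "w \<in> X'" "w \<noteq> c"
      using \<open>x \<noteq> y\<close> y by (auto simp: X'_def)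
    then show ?thesis
      unfolding G_def using sum_park_at_block[OF n_pos X'_sub that] by (auto simp: X'_def)
  qed
  have G_other: "G c = 0" if "c \<in> X - {y}" for c
  proof -
    have "cshift n c (Suc (block_len n X' c)) \<in> X"
      using block_len_insert_other[OF n_pos X_sub y a x, of c] cshift_Suc_block_len_mem[OF n_pos X_sub, of c] that
      by (simp add: X'_def)
    then show ?thesis
      using G[of c] that x_notin by (auto simp: X'_def)
  qed
  have "(\<Sum>v<n. park_at n p ({0..<n} - X') v x) = 1 + (\<Sum>c\<in>X'. G c)"
    unfolding G_def by (rule sum_park_at_eq_blocks[OF n_pos X'_sub]) (simp add: X'_def)
  also have "(\<Sum>c\<in>X'. G c) = G x + G y + (\<Sum>c\<in>X - {y}. G c)"
    using x_notin y \<open>finite X\<close> by (simp add: X'_def sum.remove)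
  also have "\<dots> = exit_left (block_len n X y - Suc a) p + exit_right a p"
    using G[of x] G[of y] G_other \<open>x \<noteq> y\<close> x y
      block_len_insert_right[OF n_pos X_sub y a x] block_len_insert_left[OF n_pos X_sub y a x]
    by (simp add: X'_def)
  finally show ?thesis
    by (simp add: X'_def)
qed

lemma prod_park_weight_insert:
  assumes X_sub: "X \<subseteq> {0..<n}" and y: "y \<in> X" and a: "a < block_len n X y"
    and x: "x = cshift n y (Suc a)"
  shows "(\<Prod>z\<in>insert x X. park_weight (block_len n (insert x X) z)) =
    park_weight a * park_weight (block_len n X y - Suc a) * (\<Prod>z\<in>X - {y}. park_weight (block_len n X z))"
proof -
  have "finite X"
    using X_sub finite_subset by blast
  have "(\<Prod>z\<in>insert x X. park_weight (block_len n (insert x X) z)) =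
      park_weight (block_len n (insert x X) x) * park_weight (block_len n (insert x X) y) *
      (\<Prod>z\<in>X - {y}. park_weight (block_len n (insert x X) z))"
    using new_spot_notin[OF n_pos X_sub y a x] y \<open>finite X\<close> by (simp add: prod.remove mult.assoc)
  also have "(\<Prod>z\<in>X - {y}. park_weight (block_len n (insert x X) z)) =
      (\<Prod>z\<in>X - {y}. park_weight (block_len n X z))"
    using block_len_insert_other[OF n_pos X_sub y a x] by (intro prod.cong refl) auto
  finally show ?thesis
    by (simp add: block_len_insert_right[OF n_pos X_sub y a x] block_len_insert_left[OF n_pos X_sub y a x])
qed

lemma parking_formula_recurrence:
  assumes p: "0 \<le> p" "p \<le> 1" and X_sub: "X \<subseteq> {0..<n}" and "X \<noteq> {}" and "card X < n"
  shows "(\<Sum>x\<in>{0..<n} - X. parking_formula n (insert x X) *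
      ((\<Sum>v<n. park_at n p ({0..<n} - insert x X) v x) / real n)) = parking_formula n X"
proof -
  define k where "k = n - card X - 1"
  define K where "K = fact k / real n ^ Suc k"
  define P where "P y = (\<Prod>z\<in>X - {y}. park_weight (block_len n X z))" for y
  define F where "F x = parking_formula n (insert x X) *
      ((\<Sum>v<n. park_at n p ({0..<n} - insert x X) v x) / real n)" for x
  have "finite X"
    using X_sub finite_subset by blast
  have F: "F (cshift n y (Suc a)) = K * P y * (park_weight a * park_weight (block_len n X y - Suc a) *
      (1 + exit_right a p + exit_left (block_len n X y - Suc a) p))"
    if y: "y \<in> X" and a: "a < block_len n X y" for y a
  proof -
    have "n - card (insert (cshift n y (Suc a)) X) = k"
      using new_spot_notin[OF n_pos X_sub y a refl] \<open>finite X\<close> by (simp add: k_def)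
    then show ?thesis
      by (simp add: F_def parking_formula_def prod_park_weight_insert[OF X_sub y a refl]
          sum_park_at_new_spot[OF X_sub y a refl] K_def P_def field_simps)
  qed
  have "(\<Sum>x\<in>{0..<n} - X. F x) = (\<Sum>y\<in>X. \<Sum>i\<in>{1..block_len n X y}. F (cshift n y i))"
    by (rule sum_complement_blocks[OF n_pos X_sub \<open>X \<noteq> {}\<close>])
  also have "\<dots> = (\<Sum>y\<in>X. K * P y * (\<Sum>a<block_len n X y. park_weight a *
      park_weight (block_len n X y - Suc a) * (1 + exit_right a p + exit_left (block_len n X y - Suc a) p)))"
    by (intro sum.cong refl) (simp add: sum.atLeast1_atMost_eq F sum_distrib_left)
  also have "\<dots> = (\<Sum>y\<in>X. K * real (block_len n X y) * (park_weight (block_len n X y) * P y))"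
    unfolding park_weight_exit_convolution[OF p] by (simp add: mult_ac)
  also have "\<dots> = K * real (\<Sum>y\<in>X. block_len n X y) * (\<Prod>z\<in>X. park_weight (block_len n X z))"
    using \<open>finite X\<close> by (simp add: P_def prod.remove sum_distrib_left sum_distrib_right)
  also have "(\<Sum>y\<in>X. block_len n X y) = Suc k"
    using sum_block_len[OF n_pos X_sub \<open>X \<noteq> {}\<close>] \<open>card X < n\<close> by (simp add: k_def)
  also have "n - card X = Suc k"
    using \<open>card X < n\<close> by (simp add: k_def)
  then have "K * real (Suc k) = fact (n - card X) / real n ^ (n - card X)"
    by (simp add: K_def)
  finally show ?thesis
    by (simp add: F_def parking_formula_def)
qed

lemma block_len_full: "y < n \<Longrightarrow> block_len n {0..<n} y = 0"
  by (rule block_len_eqI[OF n_pos]) (auto simp: cshift_less[OF n_pos])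

lemma occupied_prob_eq_parking_formula:
  assumes "0 \<le> p" "p \<le> 1"
  shows "S \<subseteq> {0..<n} \<Longrightarrow> card S < n \<Longrightarrow> occupied_prob n p (card S) S = parking_formula n ({0..<n} - S)"
proof (induction "card S" arbitrary: S)
  case 0
  then have "S = {}"
    using finite_subset by fastforce
  then show ?case
    by (simp add: parking_formula_def block_len_full park_weight_def)
next
  case (Suc k)
  define X where "X = {0..<n} - S"
  have "finite S"
    using Suc.prems finite_subset by blast
  have S: "S = {0..<n} - X"
    using Suc.prems X_def by auto
  have IH: "occupied_prob n p k (S - {x}) = parking_formula n (insert x X)" if "x \<in> S" for x
  proof -
    have compl: "{0..<n} - (S - {x}) = insert x X"
      using that Suc.prems by (auto simp: X_def)
    have card: "k = card (S - {x})"
      using Suc.hyps(2) that \<open>finite S\<close> by simp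
    have "S - {x} \<subseteq> {0..<n}" "card (S - {x}) < n"
      using Suc.prems card_Diff1_le[of S x] by auto
    from Suc.hyps(1)[OF card this] show ?thesis
      unfolding card[symmetric] compl .
  qed
  have "X \<noteq> {}" "card X < n"
    using Suc.prems Suc.hyps(2)[symmetric] \<open>finite S\<close> by (auto simp: X_def card_Diff_subset)
  have "occupied_prob n p (Suc k) S =
      (\<Sum>x\<in>S. occupied_prob n p k (S - {x}) * ((\<Sum>v<n. park_at n p (S - {x}) v x) / real n))"
    using Suc.prems(1) by (simp only: occupied_prob.simps if_True)
  also have "\<dots> =
      (\<Sum>x\<in>S. parking_formula n (insert x X) * ((\<Sum>v<n. park_at n p (S - {x}) v x) / real n))"
    using IH by (intro sum.cong refl) simp
  also have "\<dots> = parking_formula n X"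
  proof -
    have diff: "{0..<n} - insert x X = S - {x}" for x
      using S by auto
    show ?thesis
      using parking_formula_recurrence[OF assms _ \<open>X \<noteq> {}\<close> \<open>card X < n\<close>]
      unfolding diff S[symmetric] by (simp add: X_def)
  qed
  finally show ?case
    using Suc.hyps(2) by (simp add: X_def)
qed

end

section \<open>Gaps of the sorted free set\<close>

lemma strict_sorted_nth_less_iff:
  assumes "sorted_wrt (<) (xs :: nat list)" "i < length xs" "j < length xs"
  shows "xs ! i < xs ! j \<longleftrightarrow> i < j"
  using sorted_wrt_nth_less[OF assms(1)] assms(2,3) by (metis less_asym linorder_neqE_nat)

context
  fixes n :: nat and X :: "nat set"
  assumes n_pos: "n > 0" and X_sub: "X \<subseteq> {0..<n}"
begin

lemma sorted_list_of_set_facts: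
  defines "xs \<equiv> sorted_list_of_set X"
  shows "length xs = card X" and "\<And>m. m < card X \<Longrightarrow> xs ! m \<in> X"
    and "\<And>w. w \<in> X \<Longrightarrow> \<exists>m<card X. xs ! m = w"
    and "\<And>i j. i < card X \<Longrightarrow> j < card X \<Longrightarrow> xs ! i < xs ! j \<longleftrightarrow> i < j"
proof -
  have "finite X"
    using X_sub finite_subset by blast
  then have set_xs: "set xs = X" and len: "length xs = card X"
    by (simp_all add: xs_def)
  show "length xs = card X"
    by (rule len)
  show "\<And>m. m < card X \<Longrightarrow> xs ! m \<in> X" "\<And>w. w \<in> X \<Longrightarrow> \<exists>m<card X. xs ! m = w"
    using set_xs len by (auto simp: in_set_conv_nth)
  show "\<And>i j. i < card X \<Longrightarrow> j < card X \<Longrightarrow> xs ! i < xs ! j \<longleftrightarrow> i < j"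
    using strict_sorted_nth_less_iff[of xs] len by (simp add: xs_def)
qed

lemma block_len_sorted_inner:
  defines "xs \<equiv> sorted_list_of_set X"
  assumes i: "Suc i < card X"
  shows "block_len n X (xs ! i) = xs ! Suc i - xs ! i - 1"
proof -
  note facts = sorted_list_of_set_facts[folded xs_def]
  have "xs ! i < xs ! Suc i" "xs ! Suc i < n"
    using facts(4)[of i "Suc i"] facts(2)[of "Suc i"] i X_sub by auto
  show ?thesis
  proof (rule block_len_eqI[OF n_pos X_sub])
    show "cshift n (xs ! i) (Suc (xs ! Suc i - xs ! i - 1)) \<in> X"
      using \<open>xs ! i < xs ! Suc i\<close> \<open>xs ! Suc i < n\<close> facts(2)[OF i] by (simp add: cshift_def)
  next
    fix d assume d: "d < xs ! Suc i - xs ! i - 1"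
    show "cshift n (xs ! i) (Suc d) \<notin> X"
    proof
      assume "cshift n (xs ! i) (Suc d) \<in> X"
      moreover have "cshift n (xs ! i) (Suc d) = xs ! i + Suc d"
        using d \<open>xs ! Suc i < n\<close> by (simp add: cshift_def)
      ultimately obtain m where "m < card X" "xs ! m = xs ! i + Suc d"
        using facts(3) by metis
      then have "i < m" "m < Suc i"
        using facts(4)[of i m] facts(4)[of m "Suc i"] i d by auto
      then show False
        by simp
    qed
  qed
qed

lemma block_len_sorted_last:
  defines "xs \<equiv> sorted_list_of_set X"
  assumes i: "card X = Suc i"
  shows "block_len n X (xs ! i) = n + xs ! 0 - xs ! i - 1"
proof -
  note facts = sorted_list_of_set_facts[folded xs_def]
  have "xs ! 0 \<le> xs ! i" "xs ! i < n"
    using facts(4)[of i 0] facts(2)[of i] i X_sub by (auto simp: not_less[symmetric])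
  show ?thesis
  proof (rule block_len_eqI[OF n_pos X_sub])
    have "xs ! i + Suc (n + xs ! 0 - xs ! i - 1) = xs ! 0 + n"
      using \<open>xs ! 0 \<le> xs ! i\<close> \<open>xs ! i < n\<close> by linarith
    then show "cshift n (xs ! i) (Suc (n + xs ! 0 - xs ! i - 1)) \<in> X"
      using facts(2)[of 0] i \<open>xs ! 0 \<le> xs ! i\<close> \<open>xs ! i < n\<close> by (simp add: cshift_def)
  next
    fix d assume d: "d < n + xs ! 0 - xs ! i - 1"
    show "cshift n (xs ! i) (Suc d) \<notin> X"
    proof
      assume "cshift n (xs ! i) (Suc d) \<in> X"
      then obtain m where m: "m < card X" "xs ! m = cshift n (xs ! i) (Suc d)"
        using facts(3) by metis
      show False
      proof (cases "xs ! i + Suc d < n")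
        case True
        then have "xs ! i < xs ! m"
          using m by (simp add: cshift_def)
        then show False
          using facts(4)[of i m] m i by auto
      next
        case False
        moreover have "xs ! i + Suc d - n < n"
          using d \<open>xs ! 0 \<le> xs ! i\<close> \<open>xs ! i < n\<close> by linarith
        ultimately have "xs ! m = xs ! i + Suc d - n"
          using m by (simp add: cshift_def le_mod_geq)
        then have "xs ! m < xs ! 0"
          using d False by linarith
        then show False
          using facts(4)[of m 0] m i by auto
      qed
    qed
  qed
qed

lemma gap_eq_block_len:
  assumes i: "i < card X"
  shows "gap n X i = block_len n X (sorted_list_of_set X ! i)"
proof -
  define xs where "xs = sorted_list_of_set X"
  note facts = sorted_list_of_set_facts[folded xs_def]
  have gap: "gap n X i = nat ((int (xs ! ((i + 1) mod card X)) - int (xs ! i) - 1) mod int n)"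
    by (simp add: gap_def Let_def xs_def facts(1)[unfolded xs_def])
  show ?thesis
  proof (cases "Suc i < card X")
    case True
    have "xs ! i < xs ! Suc i" "xs ! Suc i < n"
      using facts(4)[of i "Suc i"] facts(2)[of "Suc i"] True i X_sub by auto
    then have eq: "int (xs ! Suc i) - int (xs ! i) - 1 = int (xs ! Suc i - xs ! i - 1)"
      and "xs ! Suc i - xs ! i - 1 < n"
      by (simp add: of_nat_diff, linarith)
    have "int (xs ! Suc i - xs ! i - 1) mod int n = int (xs ! Suc i - xs ! i - 1)"
      by (rule mod_pos_pos_trivial) (use \<open>xs ! Suc i - xs ! i - 1 < n\<close> in simp_all)
    moreover have "(i + 1) mod card X = Suc i"
      using True by simp
    ultimately show ?thesis
      unfolding gap xs_def[symmetric] block_len_sorted_inner[OF True, folded xs_def]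
      by (simp only: eq nat_int)
  next
    case False
    then have last: "card X = Suc i"
      using i by simp
    have "xs ! 0 \<le> xs ! i" "xs ! i < n"
      using facts(4)[of i 0] facts(2)[of i] last X_sub by (auto simp: not_less[symmetric])
    then have eq: "int (xs ! 0) - int (xs ! i) - 1 + int n = int (n + xs ! 0 - xs ! i - 1)"
      and "n + xs ! 0 - xs ! i - 1 < n"
      by (simp add: of_nat_diff, linarith)
    have "(int (xs ! 0) - int (xs ! i) - 1) mod int n = (int (xs ! 0) - int (xs ! i) - 1 + int n) mod int n"
      by simp
    also have "\<dots> = int (n + xs ! 0 - xs ! i - 1)"
      unfolding eq
      by (rule mod_pos_pos_trivial) (use \<open>n + xs ! 0 - xs ! i - 1 < n\<close> in simp_all)
    moreover have "(i + 1) mod card X = 0"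
      using last by simp
    ultimately show ?thesis
      unfolding gap xs_def[symmetric] block_len_sorted_last[OF last, folded xs_def]
      by (simp only: nat_int)
  qed
qed

lemma prod_gap_eq_prod_block_len:
  "(\<Prod>i<card X. h (gap n X i)) = (\<Prod>y\<in>X. h (block_len n X y))"
proof -
  have "finite X"
    using X_sub finite_subset by blast
  then have "bij_betw ((!) (sorted_list_of_set X)) {..<card X} X"
    by (intro bij_betw_nth) (auto simp: lessThan_atLeast0)
  then show ?thesis
    by (simp add: prod.reindex_bij_betw[symmetric] gap_eq_block_len)
qed

end

theorem mainTheorem4:
  fixes n Nb :: nat and p :: real and X :: "nat set"
  assumes "n \<ge> 1" and "Nb < n" and "0 \<le> p" and "p \<le> 1"
    and "X \<subseteq> {0..<n}" and "card X = n - Nb"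
  shows "free_prob n p Nb X =
    (1 / real n ^ Nb) *
    (fact Nb / (\<Prod>i<n - Nb. fact (gap n X i))) *
    (\<Prod>i<n - Nb. real (gap n X i + 1) ^ (gap n X i - 1))"
proof -
  have n_pos: "n > 0"
    using assms(1) by simp
  define S where "S = {0..<n} - X"
  have "finite X"
    using assms(5) finite_subset by blast
  then have S: "S \<subseteq> {0..<n}" "card S = Nb" "{0..<n} - S = X"
    using assms by (auto simp: S_def card_Diff_subset)
  have "free_prob n p Nb X = occupied_prob n p (card S) S"
    by (simp add: free_prob_def S_def[symmetric] S(2))
  also have "\<dots> = parking_formula n X"
    using occupied_prob_eq_parking_formula[OF n_pos assms(3,4) S(1)] S(2,3) assms(2) by simp
  also have "\<dots> = fact Nb / real n ^ Nb *
      ((\<Prod>y\<in>X. real (block_len n X y + 1) ^ (block_len n X y - 1)) / (\<Prod>y\<in>X. fact (block_len n X y)))"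
    using assms(2,6) by (simp add: parking_formula_def park_weight_def prod_dividef)
  also have "\<dots> = (1 / real n ^ Nb) * (fact Nb / (\<Prod>i<n - Nb. fact (gap n X i))) *
      (\<Prod>i<n - Nb. real (gap n X i + 1) ^ (gap n X i - 1))"
    unfolding assms(6)[symmetric] prod_gap_eq_prod_block_len[OF n_pos assms(5), of fact]
      prod_gap_eq_prod_block_len[OF n_pos assms(5), of "\<lambda>l. real (l + 1) ^ (l - 1)"]
    by simp
  finally show ?thesis .
qed

end
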